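(* Let $c_2,c_3$ be constants, $\mu(t)=t^2+c_2t+c_3$, and for $n\ge 0$ let $\vartheta_n(t)=(-4)^{-n}(2t+1/2+c_2)_n(-2t+1/2-c_2)_n$. Let $\{P_n\}_{n\ge0}$ be a sequence of monic polynomials in $\mu(t)$, $\deg P_n=n$, satisfying $$\mu(t)P_n=P_{n+1}+\beta_nP_n+\gamma_nP_{n-1}\quad(n\ge 0),\qquad P_{-1}=0,\ P_0=1,$$ and write $P_n=\sum_{k=0}^{n}A_{n,k}\vartheta_k(t)$, so that $A=(A_{n,k})_{n,k\ge0}$ is lower triangular with unit diagonal. Define the numbers $f_n$ by $\mu(t)\vartheta_n(t)=\vartheta_{n+1}(t)+f_n\vartheta_n(t)$, $n\ge0$. Then $$f_n=-\frac{c_2^2}{4}+\frac{(2n+1)^2}{16}+c_3,$$ and $$L\,A=A\,\mathbf{X}^1,\qquad \mathbf{X}^1:=X+\operatorname{diag}\{f_0,f_1,f_2,\ldots\},$$ where $L$ is the infinite tridiagonal matrix with diagonal entries $L_{n,n}=\beta_n$ ($n\ge0$), superdiagonal entries $L_{n,n+1}=1$, subdiagonal entries $L_{n,n-1}=\gamma_n$ ($n\ge1$), all other entries zero, and $X$ is the infinite matrix with $X_{n,n+1}=1$ and all other entries zero.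
   Context: Here $(a)_n=a(a+1)\cdots(a+n-1)$, $(a)_0=1$, is the Pochhammer symbol; each $\vartheta_n(t)$ is a monic polynomial of degree $n$ in the variable $\mu(t)$, and $\{\vartheta_n\}$ is a basis of the polynomials in $\mu(t)$. Indices of infinite matrices start at $0$. *)

theory Defs
  imports "HOL-Computational_Algebra.Polynomial"
begin

definition mu_poly :: "'a::field_char_0 \<Rightarrow> 'a \<Rightarrow> 'a poly" where
  "mu_poly c2 c3 = [:c3, c2, 1:]"

definition theta_poly :: "'a::field_char_0 \<Rightarrow> nat \<Rightarrow> 'a poly" where
  "theta_poly c2 n = smult (inverse ((- 4) ^ n))
     (pochhammer [:1/2 + c2, 2:] n * pochhammer [:1/2 - c2, -2:] n)"

text \<open>Product of infinite matrices (indices from 0), summing over the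
  (assumed finite) support of the rows of the left factor.\<close>
definition inf_mat_mult ::
  "(nat \<Rightarrow> nat \<Rightarrow> 'a::comm_semiring_1) \<Rightarrow> (nat \<Rightarrow> nat \<Rightarrow> 'a) \<Rightarrow> nat \<Rightarrow> nat \<Rightarrow> 'a" where
  "inf_mat_mult M N i k = (\<Sum>j | M i j \<noteq> 0. M i j * N j k)"

definition L_mat :: "(nat \<Rightarrow> 'a) \<Rightarrow> (nat \<Rightarrow> 'a) \<Rightarrow> nat \<Rightarrow> nat \<Rightarrow> 'a::zero_neq_one" where
  "L_mat \<beta> \<gamma> n j = (if j = Suc n then 1 else if j = n then \<beta> n
                     else if Suc j = n then \<gamma> n else 0)"

definition X_mat :: "nat \<Rightarrow> nat \<Rightarrow> 'a::zero_neq_one" where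
  "X_mat n j = (if j = Suc n then 1 else 0)"

definition X1_mat :: "(nat \<Rightarrow> 'a) \<Rightarrow> nat \<Rightarrow> nat \<Rightarrow> 'a::{zero_neq_one,plus}" where
  "X1_mat f n j = X_mat n j + (if j = n then f n else 0)"

end

theory Submission
  imports Defs
begin

text \<open>Both sides of \<open>L A = A X\<^sup>1\<close> have row \<open>i\<close> equal to the coordinates of
  \<open>\<mu> P\<^sub>i\<close> in the basis \<open>\<vartheta>\<^sub>k\<close>: on the left by the three-term recurrence of the
  \<open>P\<^sub>n\<close>, on the right by expanding \<open>P\<^sub>i = \<Sum> A\<^sub>i\<^sub>k \<vartheta>\<^sub>k\<close> and using
  \<open>\<mu> \<vartheta>\<^sub>k = \<vartheta>\<^sub>k\<^sub>+\<^sub>1 + f\<^sub>k \<vartheta>\<^sub>k\<close>. The latter identity holds because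
  \<open>\<vartheta>\<^sub>n\<^sub>+\<^sub>1 / \<vartheta>\<^sub>n = -(2t+1/2+c\<^sub>2+n)(-2t+1/2-c\<^sub>2+n)/4\<close> differs from \<open>\<mu>\<close> by the
  constant \<open>f\<^sub>n\<close>. The coordinates are unique since \<open>\<vartheta>\<^sub>k\<close> has degree \<open>2k\<close>.\<close>

definition theta_recur_coeff :: "'a::field_char_0 \<Rightarrow> 'a \<Rightarrow> nat \<Rightarrow> 'a" where
  "theta_recur_coeff c2 c3 n = - (c2 ^ 2) / 4 + (2 * of_nat n + 1) ^ 2 / 16 + c3"

lemma smult_sum_right: "smult c (sum g S) = (\<Sum>k\<in>S. smult c (g k))"
  by (induction S rule: infinite_finite_induct) (auto simp: smult_add_right)

lemma mu_poly_mult_theta_poly: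
  fixes c2 c3 :: "'a::field_char_0"
  shows "mu_poly c2 c3 * theta_poly c2 n
           = theta_poly c2 (Suc n) + smult (theta_recur_coeff c2 c3 n) (theta_poly c2 n)"
proof -
  define R where "R = pochhammer [:1/2 + c2, 2:] n * pochhammer [:1/2 - c2, -2:] n"
  define Q where "Q = ([:1/2 + c2, 2:] + of_nat n) * ([:1/2 - c2, -2:] + of_nat n)"
  have mu_eq: "mu_poly c2 c3 = smult (-1/4) Q + [:theta_recur_coeff c2 c3 n:]"
    by (simp add: Q_def mu_poly_def theta_recur_coeff_def of_nat_poly field_simps power2_eq_square)
  have "pochhammer [:1/2 + c2, 2:] (Suc n) * pochhammer [:1/2 - c2, -2:] (Suc n) = Q * R"
    unfolding pochhammer_Suc Q_def R_def by (simp only: mult_ac)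
  moreover have "inverse ((- 4) ^ Suc n) = inverse ((- 4) ^ n) * (-1/4 :: 'a)"
    by simp
  ultimately have "theta_poly c2 (Suc n) = smult (inverse ((- 4) ^ n)) (smult (-1/4) Q * R)"
    unfolding theta_poly_def by simp
  moreover have "theta_poly c2 n = smult (inverse ((- 4) ^ n)) R"
    by (simp add: theta_poly_def R_def)
  ultimately show ?thesis
    by (simp add: mu_eq algebra_simps)
qed

lemma theta_poly_monic:
  fixes c2 :: "'a::field_char_0"
  shows "degree (theta_poly c2 n) = 2 * n \<and> lead_coeff (theta_poly c2 n) = 1"
proof (induction n)
  case 0
  then show ?case by (simp add: theta_poly_def)
next
  case (Suc n)
  have mu: "degree (mu_poly c2 0) = 2" "lead_coeff (mu_poly c2 0) = 1" "mu_poly c2 0 \<noteq> 0"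
    by (simp_all add: mu_poly_def)
  note IH = Suc.IH[THEN conjunct1] Suc.IH[THEN conjunct2]
  then have "theta_poly c2 n \<noteq> 0"
    by auto
  have deg_top: "degree (mu_poly c2 0 * theta_poly c2 n) = 2 * Suc n"
    using IH mu \<open>theta_poly c2 n \<noteq> 0\<close> by (simp add: degree_mult_eq)
  have lead_top: "lead_coeff (mu_poly c2 0 * theta_poly c2 n) = 1"
    unfolding lead_coeff_mult using IH mu by simp
  have low: "degree (- smult (theta_recur_coeff c2 0 n) (theta_poly c2 n))
               < degree (mu_poly c2 0 * theta_poly c2 n)"
    using IH deg_top by simp
  have step: "theta_poly c2 (Suc n)
          = - smult (theta_recur_coeff c2 0 n) (theta_poly c2 n) + mu_poly c2 0 * theta_poly c2 n"
    using mu_poly_mult_theta_poly[of c2 0 n] by simp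
  have "degree (theta_poly c2 (Suc n)) = 2 * Suc n"
    unfolding step degree_add_eq_right[OF low] by (rule deg_top)
  moreover have "lead_coeff (theta_poly c2 (Suc n)) = 1"
    unfolding step lead_coeff_add_le[OF low] by (rule lead_top)
  ultimately show ?case ..
qed

lemma combination_eq_0_imp_coeff_eq_0:
  fixes b :: "nat \<Rightarrow> 'a::idom poly"
  assumes deg: "strict_mono (\<lambda>k. degree (b k))" and nz: "\<And>k. b k \<noteq> 0"
    and sum: "(\<Sum>k\<le>N. smult (a k) (b k)) = 0" and "k \<le> N"
  shows "a k = 0"
  using sum \<open>k \<le> N\<close>
proof (induction N arbitrary: k)
  case 0
  then show ?case using nz by simp
next
  case (Suc N)
  have "coeff (b j) (degree (b (Suc N))) = 0" if "j \<le> N" for j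
    using strict_monoD[OF deg, of j "Suc N"] that by (intro coeff_eq_0) simp
  then have "coeff (\<Sum>k\<le>Suc N. smult (a k) (b k)) (degree (b (Suc N)))
               = a (Suc N) * lead_coeff (b (Suc N))"
    by (simp add: coeff_sum)
  with Suc.prems(1) nz have top: "a (Suc N) = 0"
    by simp
  with Suc.prems(1) have "(\<Sum>k\<le>N. smult (a k) (b k)) = 0"
    by simp
  with Suc.IH Suc.prems(2) top show ?case
    by (cases "k = Suc N") auto
qed

lemma theta_poly_coordinates_unique:
  fixes c2 :: "'a::field_char_0"
  assumes "(\<Sum>j\<le>N. smult (a j) (theta_poly c2 j)) = (\<Sum>j\<le>N. smult (b j) (theta_poly c2 j))"
    and "k \<le> N"
  shows "a k = b k"
proof -
  have "strict_mono (\<lambda>j. degree (theta_poly c2 j))"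
    by (rule strict_monoI) (simp add: theta_poly_monic)
  moreover have "theta_poly c2 j \<noteq> 0" for j
    using theta_poly_monic[of c2 j] by auto
  moreover have "(\<Sum>j\<le>N. smult (a j - b j) (theta_poly c2 j)) = 0"
    using assms(1) by (simp add: smult_diff_left sum_subtractf)
  ultimately have "a k - b k = 0"
    using assms(2) by (rule combination_eq_0_imp_coeff_eq_0)
  then show ?thesis by simp
qed

lemma mu_poly_mult_theta_combination:
  fixes c2 c3 :: "'a::field_char_0"
  assumes "a (Suc M) = 0"
  shows "mu_poly c2 c3 * (\<Sum>j\<le>M. smult (a j) (theta_poly c2 j))
           = (\<Sum>j\<le>Suc M. smult ((if j = 0 then 0 else a (j - 1)) + a j * theta_recur_coeff c2 c3 j)
                                  (theta_poly c2 j))"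
proof -
  have "mu_poly c2 c3 * (\<Sum>j\<le>M. smult (a j) (theta_poly c2 j))
          = (\<Sum>j\<le>M. smult (a j) (theta_poly c2 (Suc j)))
            + (\<Sum>j\<le>M. smult (a j * theta_recur_coeff c2 c3 j) (theta_poly c2 j))"
    by (simp add: sum_distrib_left mu_poly_mult_theta_poly smult_add_right sum.distrib)
  also have "(\<Sum>j\<le>M. smult (a j) (theta_poly c2 (Suc j)))
               = (\<Sum>j\<le>Suc M. smult (if j = 0 then 0 else a (j - 1)) (theta_poly c2 j))"
    by (subst sum.atMost_Suc_shift) simp
  also have "(\<Sum>j\<le>M. smult (a j * theta_recur_coeff c2 c3 j) (theta_poly c2 j))
               = (\<Sum>j\<le>Suc M. smult (a j * theta_recur_coeff c2 c3 j) (theta_poly c2 j))"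
    using assms by simp
  finally show ?thesis
    by (simp add: sum.distrib smult_add_left)
qed

lemma inf_mat_mult_L_mat:
  fixes \<beta> \<gamma> :: "nat \<Rightarrow> 'a::comm_ring_1"
  shows "inf_mat_mult (L_mat \<beta> \<gamma>) B i k
           = B (Suc i) k + \<beta> i * B i k + (if i = 0 then 0 else \<gamma> i * B (i - 1) k)"
proof -
  define T where "T = (if i = 0 then {Suc i, i} else {Suc i, i, i - 1})"
  have "{j. L_mat \<beta> \<gamma> i j \<noteq> 0} \<subseteq> T"
    by (auto simp: T_def L_mat_def split: if_splits)
  then have "inf_mat_mult (L_mat \<beta> \<gamma>) B i k = (\<Sum>j\<in>T. L_mat \<beta> \<gamma> i j * B j k)"
    unfolding inf_mat_mult_def by (intro sum.mono_neutral_left) (auto simp: T_def)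
  also have "\<dots> = B (Suc i) k + \<beta> i * B i k + (if i = 0 then 0 else \<gamma> i * B (i - 1) k)"
    by (cases i) (auto simp: T_def L_mat_def)
  finally show ?thesis .
qed

lemma inf_mat_mult_X1_mat:
  fixes A :: "nat \<Rightarrow> nat \<Rightarrow> 'a::comm_ring_1"
  assumes row_support: "\<And>j. M < j \<Longrightarrow> A i j = 0" and "k \<le> M"
  shows "inf_mat_mult A (X1_mat f) i k = (if k = 0 then 0 else A i (k - 1)) + A i k * f k"
proof -
  have "{j. A i j \<noteq> 0} \<subseteq> {..M}"
    using row_support by (auto simp: not_le[symmetric])
  then have "inf_mat_mult A (X1_mat f) i k = (\<Sum>j\<le>M. A i j * X1_mat f j k)"
    unfolding inf_mat_mult_def by (intro sum.mono_neutral_left) auto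
  also have "\<dots> = (\<Sum>j\<le>M. (if Suc j = k then A i j else 0) + (if j = k then A i j * f j else 0))"
    by (intro sum.cong) (auto simp: X1_mat_def X_mat_def)
  also have "\<dots> = (\<Sum>j\<le>M. if Suc j = k then A i j else 0) + (\<Sum>j\<le>M. if j = k then A i j * f j else 0)"
    by (rule sum.distrib)
  also have "\<dots> = (if k = 0 then 0 else A i (k - 1)) + A i k * f k"
    using \<open>k \<le> M\<close> by (cases k) (simp_all add: sum.delta')
  finally show ?thesis .
qed

lemma L_mat_mult_eq_mult_X1_mat:
  fixes c2 c3 :: "'a::field_char_0"
  assumes rec0: "mu_poly c2 c3 * P 0 = P 1 + smult (\<beta> 0) (P 0)"
    and rec: "\<And>n. n \<ge> 1 \<Longrightarrow>
               mu_poly c2 c3 * P n = P (Suc n) + smult (\<beta> n) (P n) + smult (\<gamma> n) (P (n - 1))"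
    and A_lower: "\<And>n k. n < k \<Longrightarrow> A n k = 0"
    and A_expand: "\<And>n. P n = (\<Sum>k\<le>n. smult (A n k) (theta_poly c2 k))"
  shows "inf_mat_mult (L_mat \<beta> \<gamma>) A = inf_mat_mult A (X1_mat (theta_recur_coeff c2 c3))"
proof (intro ext)
  fix i k :: nat
  let ?\<theta> = "theta_poly c2" and ?f = "theta_recur_coeff c2 c3"
  define M where "M = i + k"
  have expand: "P n = (\<Sum>j\<le>M'. smult (A n j) (?\<theta> j))" if "n \<le> M'" for n M'
    unfolding A_expand[of n] using that A_lower by (intro sum.mono_neutral_left) auto
  define \<gamma>' where "\<gamma>' n = (if n = 0 then 0 else \<gamma> n)" for n
  have "mu_poly c2 c3 * P i = P (Suc i) + smult (\<beta> i) (P i) + smult (\<gamma>' i) (P (i - 1))"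
    using rec0 rec[of i] by (cases "i = 0") (simp_all add: \<gamma>'_def)
  also have "\<dots> = (\<Sum>j\<le>Suc M. smult (A (Suc i) j + \<beta> i * A i j + \<gamma>' i * A (i - 1) j) (?\<theta> j))"
    by (simp add: expand[of _ "Suc M"] M_def smult_sum_right sum.distrib smult_add_left
             del: sum.atMost_Suc)
  finally have by_recurrence: "mu_poly c2 c3 * P i = \<dots>" .
  have by_expansion: "mu_poly c2 c3 * P i
      = (\<Sum>j\<le>Suc M. smult ((if j = 0 then 0 else A i (j - 1)) + A i j * ?f j) (?\<theta> j))"
    unfolding expand[of i M, OF le_add1[of i k, folded M_def]]
    by (rule mu_poly_mult_theta_combination) (simp add: A_lower M_def)
  have "(if k = 0 then 0 else A i (k - 1)) + A i k * ?f k
          = A (Suc i) k + \<beta> i * A i k + \<gamma>' i * A (i - 1) k"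
    by (rule theta_poly_coordinates_unique[OF trans[OF by_expansion[symmetric] by_recurrence]])
      (simp add: M_def)
  moreover have "inf_mat_mult A (X1_mat ?f) i k = (if k = 0 then 0 else A i (k - 1)) + A i k * ?f k"
    by (rule inf_mat_mult_X1_mat[where M = M]) (simp_all add: A_lower M_def)
  ultimately show "inf_mat_mult (L_mat \<beta> \<gamma>) A i k = inf_mat_mult A (X1_mat ?f) i k"
    by (simp add: inf_mat_mult_L_mat \<gamma>'_def)
qed

theorem lemma2p1:
  fixes c2 c3 :: "'a::field_char_0"
    and P :: "nat \<Rightarrow> 'a poly"
    and \<beta> \<gamma> :: "nat \<Rightarrow> 'a"
    and A :: "nat \<Rightarrow> nat \<Rightarrow> 'a"
  assumes monic_in_mu: "\<And>n. \<exists>Q. degree Q = n \<and> lead_coeff Q = 1 \<and>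
                                 P n = pcompose Q (mu_poly c2 c3)"
    and P0: "P 0 = 1"
    and rec0: "mu_poly c2 c3 * P 0 = P 1 + smult (\<beta> 0) (P 0)"
    and rec: "\<And>n. n \<ge> 1 \<Longrightarrow>
               mu_poly c2 c3 * P n = P (Suc n) + smult (\<beta> n) (P n) + smult (\<gamma> n) (P (n - 1))"
    and A_lower: "\<And>n k. n < k \<Longrightarrow> A n k = 0"
    and A_expand: "\<And>n. P n = (\<Sum>k\<le>n. smult (A n k) (theta_poly c2 k))"
  shows "(\<forall>n. mu_poly c2 c3 * theta_poly c2 n
              = theta_poly c2 (Suc n)
                + smult (- (c2 ^ 2) / 4 + (2 * of_nat n + 1) ^ 2 / 16 + c3) (theta_poly c2 n))
       \<and> inf_mat_mult (L_mat \<beta> \<gamma>) A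
         = inf_mat_mult A (X1_mat (\<lambda>n. - (c2 ^ 2) / 4 + (2 * of_nat n + 1) ^ 2 / 16 + c3))"
  using mu_poly_mult_theta_poly L_mat_mult_eq_mult_X1_mat[OF rec0 rec A_lower A_expand]
  unfolding theta_recur_coeff_def[abs_def] by blast

end
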